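(* Let $\varepsilon,\delta\in[0,1]$ and let $X=2^\mathbb{N}$ (with the uniform product measure) or $X=[0,1]$ (with Lebesgue measure). Then the following are equivalent: (i) $\mathsf{P}_{>\varepsilon}\mathsf{C}_{X}\le_W\mathsf{P}_{>\delta}\mathsf{C}_{X}$; (ii) $\mathsf{P}_{>\varepsilon}\mathsf{C}_{X}\le_{sW}\mathsf{P}_{>\delta}\mathsf{C}_{X}$; (iii) $\varepsilon\ge\delta$.
   Context: A represented space is a pair $(X,\delta_X)$ with $\delta_X:\subseteq\mathbb{N}^\mathbb{N}\to X$ a partial surjection; $[0,1]$ carries its Cauchy representation. A realizer of $f:\subseteq X\rightrightarrows Y$ is a partial $F$ with $\delta_Y F(p)\in f(\delta_X(p))$ for all $p\in\mathrm{dom}(f\circ\delta_X)$. $f\le_W g$ if there are computable partial $H,K:\subseteq\mathbb{N}^\mathbb{N}\to\mathbb{N}^\mathbb{N}$ such that $p\mapsto H\langle p,GK(p)\rangle$ realizes $f$ for every realizer $G$ of $g$; $f\le_{sW}g$ if instead $HGK$ realizes $f$ for every realizer $G$ of $g$. $\mathcal{A}_-(X)$ denotes the closed subsets of $X$ represented by negative information (a name of $A$ enumerates basic open sets whose union is $X\setminus A$). For a Borel measure $\mu$ on $X$ and $\varepsilon\in\mathbb R$, $\mathsf{P}_{>\varepsilon}\mathsf{C}_X:\subseteq\mathcal{A}_-(X)\rightrightarrows X$, $A\mapsto A$, is defined on all closed $A$ with $\mu(A)>\varepsilon$ (nonempty). The uniform measure on $2^\mathbb N$ satisfies $\mu(w2^\mathbb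 N)=2^{-|w|}$. *)

theory Defs
  imports "HOL-Probability.Probability" "HOL-Library.Nat_Bijection"
begin

datatype recf = Zer | Suc_f | Proj nat | Comp recf "recf list" | Prim recf recf | Mini recf

inductive reval :: "recf \<Rightarrow> nat list \<Rightarrow> nat \<Rightarrow> bool" where
  "reval Zer xs 0"
| "reval Suc_f (x # xs) (Suc x)"
| "i < length xs \<Longrightarrow> reval (Proj i) xs (xs ! i)"
| "list_all2 (\<lambda>g y. reval g xs y) gs ys \<Longrightarrow> reval f ys z \<Longrightarrow> reval (Comp f gs) xs z"
| "reval f xs z \<Longrightarrow> reval (Prim f g) (0 # xs) z"
| "reval (Prim f g) (n # xs) y \<Longrightarrow> reval g (n # y # xs) z \<Longrightarrow> reval (Prim f g) (Suc n # xs) z"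
| "reval f (n # xs) 0 \<Longrightarrow> (\<forall>m<n. \<exists>y. reval f (m # xs) (Suc y)) \<Longrightarrow> reval (Mini f) xs n"

type_synonym baire = "nat \<Rightarrow> nat"
type_synonym pfun = "baire \<Rightarrow> baire option"

definition prefix_code :: "baire \<Rightarrow> nat \<Rightarrow> nat" where
  "prefix_code p k = list_encode (map p [0..<k])"

text \<open>F :\<subseteq> N^N -> N^N is computable iff some Type-2 machine (here: a partial
recursive e, which on a coded finite prefix of the input and an index n may output the
n-th output symbol) computes F(p) for every p in dom F.\<close>
definition computable :: "pfun \<Rightarrow> bool" where
  "computable F \<longleftrightarrow> (\<exists>e. \<forall>p q. F p = Some q \<longrightarrow>
      (\<forall>n. \<exists>k. reval e [prefix_code p k, n] (q n)) \<and>
      (\<forall>k n m. reval e [prefix_code p k, n] m \<longrightarrow> m = q n))"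

definition bpair :: "baire \<Rightarrow> baire \<Rightarrow> baire" where
  "bpair p q = (\<lambda>n. if even n then p (n div 2) else q (n div 2))"

text \<open>A (partial multi-valued) problem f :\<subseteq> X \<rightrightarrows> Y together with the
representations of X and Y (given as single-valued naming relations), its domain and its
values.\<close>
record ('a, 'b) problem =
  rep_in :: "baire \<Rightarrow> 'a \<Rightarrow> bool"
  rep_out :: "baire \<Rightarrow> 'b \<Rightarrow> bool"
  pdom :: "'a set"
  pval :: "'a \<Rightarrow> 'b set"

definition realizes :: "('a, 'b) problem \<Rightarrow> pfun \<Rightarrow> bool" where
  "realizes f F \<longleftrightarrow> (\<forall>p x. rep_in f p x \<and> x \<in> pdom f \<longrightarrow>
      (\<exists>q y. F p = Some q \<and> rep_out f q y \<and> y \<in> pval f x))"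

definition weihrauch_le :: "('a, 'b) problem \<Rightarrow> ('c, 'd) problem \<Rightarrow> bool" where
  "weihrauch_le f g \<longleftrightarrow> (\<exists>H K. computable H \<and> computable K \<and>
      (\<forall>G. realizes g G \<longrightarrow>
         realizes f (\<lambda>p. Option.bind (K p) (\<lambda>r. Option.bind (G r) (\<lambda>s. H (bpair p s))))))"

definition strong_weihrauch_le :: "('a, 'b) problem \<Rightarrow> ('c, 'd) problem \<Rightarrow> bool" where
  "strong_weihrauch_le f g \<longleftrightarrow> (\<exists>H K. computable H \<and> computable K \<and>
      (\<forall>G. realizes g G \<longrightarrow>
         realizes f (\<lambda>p. Option.bind (K p) (\<lambda>r. Option.bind (G r) H))))"

text \<open>Given the point set X and a numbering B of basic open sets (relative to X),
a name p of a closed set A enumerates basic open sets (p n = 0: nothing;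
p n = Suc k: basic set B k) whose union is X - A.\<close>
definition neg_closed_rep :: "'x set \<Rightarrow> (nat \<Rightarrow> 'x set) \<Rightarrow> baire \<Rightarrow> 'x set \<Rightarrow> bool" where
  "neg_closed_rep X B p A \<longleftrightarrow> A = X - (\<Union>n\<in>{n. p n \<noteq> 0}. B (p n - 1))"

definition PC :: "'x set \<Rightarrow> (nat \<Rightarrow> 'x set) \<Rightarrow> (baire \<Rightarrow> 'x \<Rightarrow> bool) \<Rightarrow> 'x measure \<Rightarrow> real
    \<Rightarrow> ('x set, 'x) problem" where
  "PC X B \<delta> \<mu> \<epsilon> = \<lparr> rep_in = neg_closed_rep X B, rep_out = \<delta>,
      pdom = {A. measure \<mu> A > \<epsilon>}, pval = (\<lambda>A. A) \<rparr>"

definition cantor_rep :: "baire \<Rightarrow> (nat \<Rightarrow> bool) \<Rightarrow> bool" where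
  "cantor_rep p x \<longleftrightarrow> (\<forall>n. p n < 2) \<and> x = (\<lambda>n. p n = 1)"

definition cantor_word :: "nat \<Rightarrow> bool list" where
  "cantor_word k = map (\<lambda>n. n \<noteq> 0) (list_decode k)"

definition cantor_basic :: "nat \<Rightarrow> (nat \<Rightarrow> bool) set" where
  "cantor_basic k = {x. \<forall>i < length (cantor_word k). x i = cantor_word k ! i}"

definition cantor_measure :: "(nat \<Rightarrow> bool) measure" where
  "cantor_measure = PiM UNIV (\<lambda>_::nat. measure_pmf (bernoulli_pmf (1/2)))"

definition PC_cantor :: "real \<Rightarrow> ((nat \<Rightarrow> bool) set, nat \<Rightarrow> bool) problem" where
  "PC_cantor \<epsilon> = PC UNIV cantor_basic cantor_rep cantor_measure \<epsilon>"

definition rat_num :: "nat \<Rightarrow> real" where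
  "rat_num k = real_of_int (int_decode (fst (prod_decode k))) / real (Suc (snd (prod_decode k)))"

definition unit_rep :: "baire \<Rightarrow> real \<Rightarrow> bool" where
  "unit_rep p x \<longleftrightarrow> x \<in> {0..1} \<and> (\<forall>n. \<bar>rat_num (p n) - x\<bar> \<le> (1/2) ^ n)"

definition unit_basic :: "nat \<Rightarrow> real set" where
  "unit_basic k = {x \<in> {0..1}. rat_num (fst (prod_decode k)) < x \<and> x < rat_num (snd (prod_decode k))}"

definition PC_unit :: "real \<Rightarrow> (real set, real) problem" where
  "PC_unit \<epsilon> = PC {0..1} unit_basic unit_rep lborel \<epsilon>"

end

theory Submission
  imports Defs
begin

text \<open>If \<open>\<delta> \<le> \<epsilon>\<close>, every instance of positive choice with threshold \<open>\<epsilon>\<close> is one with threshold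
  \<open>\<delta>\<close>, so the identity is a strong reduction. Conversely, every (strong) Weihrauch reduction is
  continuous, and for \<open>\<epsilon> < \<delta>\<close> no continuous reduction exists. Feed it the name of the whole
  space: the forward functional names a set \<open>Z\<close> of measure \<open>> \<delta>\<close>. A finite prefix of this input
  fixes an outer approximation of \<open>Z\<close> (valid for every input with that prefix) and, for most points
  of \<open>Z\<close>, the first output symbols of the backward functional, hence a cell of a fine partition that
  contains the final answer. Deleting the basic sets of the cells carrying most of \<open>Z\<close> leaves an
  instance of measure \<open>> \<epsilon>\<close> that has a name with the same prefix. The set the forward functional
  names for it has measure \<open>> \<delta>\<close> and lies in the outer approximation, so it meets the heavy cells;
  there the backward functional answers with a deleted point.\<close>

section \<open>Computability via \<mu>-recursive functions\<close>

definition computes :: "recf \<Rightarrow> nat \<Rightarrow> (nat list \<Rightarrow> nat) \<Rightarrow> bool" where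
  "computes e k F \<longleftrightarrow> (\<forall>xs y. length xs = k \<longrightarrow> (reval e xs y \<longleftrightarrow> y = F xs))"

lemma computes_cong:
  "computes e k F \<Longrightarrow> (\<And>xs. length xs = k \<Longrightarrow> F xs = F' xs) \<Longrightarrow> computes e k F'"
  by (simp add: computes_def)

lemma computes_Zer: "computes Zer k (\<lambda>_. 0)"
  by (auto simp: computes_def elim: reval.cases intro: reval.intros)

lemma computes_Suc: "computes Suc_f (Suc k) (\<lambda>xs. Suc (hd xs))"
  by (auto simp: computes_def length_Suc_conv elim: reval.cases intro: reval.intros)

lemma computes_Proj: "i < k \<Longrightarrow> computes (Proj i) k (\<lambda>xs. xs ! i)"
  by (auto simp: computes_def elim: reval.cases intro: reval.intros)

lemma reval_Comp_iff:
  "reval (Comp f gs) xs z \<longleftrightarrow> (\<exists>ys. list_all2 (\<lambda>g y. reval g xs y) gs ys \<and> reval f ys z)"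
  by (auto elim: reval.cases intro: reval.intros)

lemma computes_Comp:
  assumes f: "computes f (length gs) F" and gs: "list_all2 (\<lambda>g G. computes g k G) gs Gs"
  shows "computes (Comp f gs) k (\<lambda>xs. F (map (\<lambda>G. G xs) Gs))"
proof -
  have args: "list_all2 (\<lambda>g y. reval g xs y) gs ys \<longleftrightarrow> ys = map (\<lambda>G. G xs) Gs"
    if "length xs = k" for xs ys
    using gs
  proof (induction gs Gs arbitrary: ys rule: list_all2_induct)
    case (Cons g gs G Gs)
    then show ?case using that by (cases ys) (auto simp: computes_def)
  qed simp
  show ?thesis
    using f args list_all2_lengthD[OF gs] by (auto simp: computes_def reval_Comp_iff)
qed

lemma computes_Comp1:
  "computes f (Suc 0) F \<Longrightarrow> computes g k G \<Longrightarrow> computes (Comp f [g]) k (\<lambda>xs. F [G xs])"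
  using computes_Comp[of f "[g]" F k "[G]"] by simp

lemma computes_Comp2:
  "computes f (Suc (Suc 0)) F \<Longrightarrow> computes g k G \<Longrightarrow> computes h k H \<Longrightarrow>
    computes (Comp f [g, h]) k (\<lambda>xs. F [G xs, H xs])"
  using computes_Comp[of f "[g, h]" F k "[G, H]"] by simp

lemma computes_Prim:
  assumes f: "computes f k F" and g: "computes g (Suc (Suc k)) G"
  shows "computes (Prim f g) (Suc k) (\<lambda>xs. rec_nat (F (tl xs)) (\<lambda>n y. G (n # y # tl xs)) (hd xs))"
proof -
  have prim: "reval (Prim f g) (n # ys) y \<longleftrightarrow> y = rec_nat (F ys) (\<lambda>n y. G (n # y # ys)) n"
    if "length ys = k" for n ys y
  proof (induction n arbitrary: y)
    case 0
    have "reval (Prim f g) (0 # ys) y \<longleftrightarrow> reval f ys y"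
      by (auto elim: reval.cases intro: reval.intros)
    then show ?case using f that by (simp add: computes_def)
  next
    case (Suc n)
    have "reval (Prim f g) (Suc n # ys) y \<longleftrightarrow>
        (\<exists>z. reval (Prim f g) (n # ys) z \<and> reval g (n # z # ys) y)"
      by (auto elim: reval.cases intro: reval.intros)
    then show ?case using Suc g that by (simp add: computes_def)
  qed
  show ?thesis
    unfolding computes_def by (auto simp: length_Suc_conv prim)
qed

lemma reval_Mini_iff:
  "reval (Mini f) xs n \<longleftrightarrow> reval f (n # xs) 0 \<and> (\<forall>m<n. \<exists>y. reval f (m # xs) (Suc y))"
  by (auto elim: reval.cases intro: reval.intros)

lemma reval_Mini_Least:
  assumes f: "computes f (Suc k) F" and xs: "length xs = k" and ex: "\<exists>n. F (n # xs) = 0"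
  shows "reval (Mini f) xs y \<longleftrightarrow> y = (LEAST n. F (n # xs) = 0)"
proof -
  have F: "reval f (m # xs) z \<longleftrightarrow> z = F (m # xs)" for m z
    using f xs by (simp add: computes_def)
  have "F (y # xs) = 0 \<and> (\<forall>m<y. F (m # xs) \<noteq> 0) \<longleftrightarrow> y = (LEAST n. F (n # xs) = 0)"
    using ex by (metis (mono_tags, lifting) LeastI_ex Least_le le_neq_implies_less not_less_Least)
  then show ?thesis
    unfolding reval_Mini_iff F by (metis not0_implies_Suc Zero_not_Suc)
qed

definition rf_pred :: recf where "rf_pred = Prim Zer (Proj 0)"
definition rf_add :: recf where "rf_add = Prim (Proj 0) (Comp Suc_f [Proj 1])"
definition rf_sub :: recf where "rf_sub = Comp (Prim (Proj 0) (Comp rf_pred [Proj 1])) [Proj 1, Proj 0]"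
definition rf_triangle :: recf where "rf_triangle = Prim Zer (Comp Suc_f [Comp rf_add [Proj 0, Proj 1]])"

lemma computes_rf_pred: "computes rf_pred (Suc 0) (\<lambda>xs. xs ! 0 - 1)"
proof -
  have rec: "rec_nat 0 (\<lambda>n y. n) m = m - 1" for m by (cases m) auto
  show ?thesis
    unfolding rf_pred_def by (rule computes_cong[OF computes_Prim[OF computes_Zer computes_Proj]])
      (auto simp: length_Suc_conv rec)
qed

lemma computes_rf_add: "computes rf_add (Suc (Suc 0)) (\<lambda>xs. xs ! 0 + xs ! 1)"
proof -
  have rec: "rec_nat x (\<lambda>n. Suc) m = m + x" for x m by (induction m) auto
  show ?thesis
    unfolding rf_add_def
    by (rule computes_cong[OF computes_Prim[OF computes_Proj computes_Comp1[OF computes_Suc computes_Proj]]])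
      (auto simp: length_Suc_conv rec)
qed

lemma computes_rf_sub: "computes rf_sub (Suc (Suc 0)) (\<lambda>xs. xs ! 0 - xs ! 1)"
proof -
  have rec: "rec_nat x (\<lambda>n y. y - Suc 0) m = x - m" for x m by (induction m) auto
  have "computes (Prim (Proj 0) (Comp rf_pred [Proj 1])) (Suc (Suc 0)) (\<lambda>xs. xs ! 1 - xs ! 0)"
    by (intro computes_cong[OF computes_Prim[OF computes_Proj computes_Comp1[OF computes_rf_pred computes_Proj]]])
      (auto simp: length_Suc_conv rec)
  then show ?thesis
    unfolding rf_sub_def by (rule computes_cong[OF computes_Comp2[OF _ computes_Proj computes_Proj]]) auto
qed

lemma computes_rf_triangle: "computes rf_triangle (Suc 0) (\<lambda>xs. triangle (xs ! 0))"
proof -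
  have rec: "rec_nat 0 (\<lambda>n y. Suc (n + y)) m = triangle m" for m by (induction m) auto
  show ?thesis
    unfolding rf_triangle_def
    by (rule computes_cong[OF computes_Prim[OF computes_Zer
          computes_Comp1[OF computes_Suc computes_Comp2[OF computes_rf_add computes_Proj computes_Proj]]]])
      (auto simp: length_Suc_conv rec)
qed

definition tri_root :: "nat \<Rightarrow> nat" where
  "tri_root z = (LEAST s. z < triangle (Suc s))"

lemma tri_root_bounds: "triangle (tri_root z) \<le> z" "z < triangle (Suc (tri_root z))"
proof -
  have ex: "\<exists>s. z < triangle (Suc s)"
    by (rule exI[of _ z]) (induction z, auto)
  show "z < triangle (Suc (tri_root z))"
    unfolding tri_root_def using ex by (rule LeastI_ex)
  show "triangle (tri_root z) \<le> z"
  proof (cases "tri_root z")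
    case (Suc s)
    then have "\<not> z < triangle (Suc s)"
      unfolding tri_root_def by (metis lessI not_less_Least)
    then show ?thesis using Suc by simp
  qed simp
qed

lemma prod_decode_tri_root:
  "prod_decode z = (z - triangle (tri_root z), tri_root z - (z - triangle (tri_root z)))"
proof -
  have "z - triangle (tri_root z) \<le> tri_root z" using tri_root_bounds[of z] by simp
  then have "prod_encode (z - triangle (tri_root z), tri_root z - (z - triangle (tri_root z))) = z"
    using tri_root_bounds(1)[of z] by (simp add: prod_encode_def)
  then show ?thesis by (metis prod_encode_inverse)
qed

definition rf_tri_root :: recf where
  "rf_tri_root = Mini (Comp rf_sub [Comp Suc_f [Proj 1], Comp rf_triangle [Comp Suc_f [Proj 0]]])"
definition rf_fst :: recf where "rf_fst = Comp rf_sub [Proj 0, Comp rf_triangle [rf_tri_root]]"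
definition rf_snd :: recf where "rf_snd = Comp rf_sub [rf_tri_root, rf_fst]"

lemma computes_rf_tri_root: "computes rf_tri_root (Suc 0) (\<lambda>xs. tri_root (xs ! 0))"
proof -
  have f: "computes (Comp rf_sub [Comp Suc_f [Proj 1], Comp rf_triangle [Comp Suc_f [Proj 0]]])
      (Suc (Suc 0)) (\<lambda>xs. Suc (xs ! 1) - triangle (Suc (xs ! 0)))"
    by (rule computes_cong[OF computes_Comp2[OF computes_rf_sub computes_Comp1[OF computes_Suc computes_Proj]
          computes_Comp1[OF computes_rf_triangle computes_Comp1[OF computes_Suc computes_Proj]]]]) auto
  have "reval rf_tri_root [z] y \<longleftrightarrow> y = tri_root z" for z y
  proof -
    have "(\<lambda>n. Suc z - triangle (Suc n) = 0) = (\<lambda>n. z < triangle (Suc n))" by auto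
    then show ?thesis
      unfolding rf_tri_root_def using reval_Mini_Least[OF f, of "[z]" y] tri_root_bounds(2)[of z]
      by (auto simp: tri_root_def)
  qed
  then show ?thesis by (auto simp: computes_def length_Suc_conv)
qed

lemma computes_rf_fst: "computes rf_fst (Suc 0) (\<lambda>xs. fst (prod_decode (xs ! 0)))"
  unfolding rf_fst_def
  by (rule computes_cong[OF computes_Comp2[OF computes_rf_sub computes_Proj
        computes_Comp1[OF computes_rf_triangle computes_rf_tri_root]]])
    (auto simp: length_Suc_conv prod_decode_tri_root)

lemma computes_rf_snd: "computes rf_snd (Suc 0) (\<lambda>xs. snd (prod_decode (xs ! 0)))"
  unfolding rf_snd_def
  by (rule computes_cong[OF computes_Comp2[OF computes_rf_sub computes_rf_tri_root computes_rf_fst]])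
    (auto simp: length_Suc_conv prod_decode_tri_root)

text \<open>On the code \<open>0\<close> of the empty list both return \<open>0\<close>.\<close>

definition code_hd :: "nat \<Rightarrow> nat" where "code_hd c = fst (prod_decode (c - 1))"
definition code_tl :: "nat \<Rightarrow> nat" where "code_tl c = snd (prod_decode (c - 1))"

lemma code_hd_list_decode: "list_decode c \<noteq> [] \<Longrightarrow> code_hd c = hd (list_decode c)"
  by (cases c) (auto simp: code_hd_def split: prod.split)

lemma list_decode_code_tl: "list_decode (code_tl c) = tl (list_decode c)"
proof (cases c)
  case 0
  have "prod_decode 0 = (0, 0)" by (simp add: prod_decode_def prod_decode_aux.simps)
  then show ?thesis using 0 by (simp add: code_tl_def)
qed (auto simp: code_tl_def split: prod.split)

lemma list_decode_funpow_code_tl: "list_decode ((code_tl ^^ j) c) = drop j (list_decode c)"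
  by (induction j) (auto simp: list_decode_code_tl drop_Suc tl_drop)

definition rf_hd :: recf where "rf_hd = Comp rf_fst [rf_pred]"
definition rf_drop :: recf where "rf_drop = Prim (Proj 0) (Comp (Comp rf_snd [rf_pred]) [Proj 1])"

lemma computes_rf_hd: "computes rf_hd (Suc 0) (\<lambda>xs. code_hd (xs ! 0))"
  unfolding rf_hd_def
  by (rule computes_cong[OF computes_Comp1[OF computes_rf_fst computes_rf_pred]])
    (auto simp: length_Suc_conv code_hd_def)

lemma computes_rf_drop:
  "computes rf_drop (Suc (Suc 0)) (\<lambda>xs. (code_tl ^^ (xs ! 0)) (xs ! 1))"
proof -
  have tl: "computes (Comp rf_snd [rf_pred]) (Suc 0) (\<lambda>xs. code_tl (xs ! 0))"
    by (rule computes_cong[OF computes_Comp1[OF computes_rf_snd computes_rf_pred]])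
      (auto simp: length_Suc_conv code_tl_def)
  have rec: "rec_nat c (\<lambda>n y. code_tl y) m = (code_tl ^^ m) c" for c m
    by (induction m) auto
  show ?thesis
    unfolding rf_drop_def
    by (rule computes_cong[OF computes_Prim[OF computes_Proj computes_Comp1[OF tl computes_Proj]]])
      (auto simp: length_Suc_conv rec)
qed

definition rf_nonzero :: recf where "rf_nonzero = Mini (Comp rf_sub [Comp Suc_f [Zer], Proj 1])"

lemma reval_rf_nonzero: "reval rf_nonzero [c] y \<longleftrightarrow> c \<noteq> 0 \<and> y = 0"
proof -
  have f: "computes (Comp rf_sub [Comp Suc_f [Zer], Proj 1]) (Suc (Suc 0)) (\<lambda>xs. 1 - xs ! 1)"
    by (rule computes_cong[OF computes_Comp2[OF computes_rf_sub computes_Comp1[OF computes_Suc computes_Zer]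
          computes_Proj]]) auto
  show ?thesis
  proof (cases "c = 0")
    case True
    then show ?thesis
      using f unfolding rf_nonzero_def reval_Mini_iff by (simp add: computes_def)
  next
    case False
    then show ?thesis
      unfolding rf_nonzero_def using reval_Mini_Least[OF f, of "[c]" y] by simp
  qed
qed

lemma reval_Comp1_iff: "reval (Comp f [g]) xs z \<longleftrightarrow> (\<exists>y. reval g xs y \<and> reval f [y] z)"
  unfolding reval_Comp_iff by (auto simp: list_all2_Cons1)

lemma reval_Comp2_iff:
  "reval (Comp f [g, h]) xs z \<longleftrightarrow> (\<exists>y1 y2. reval g xs y1 \<and> reval h xs y2 \<and> reval f [y1, y2] z)"
  unfolding reval_Comp_iff by (auto simp: list_all2_Cons1)

text \<open>The zero test makes the function undefined where the position lies beyond the end of the list.\<close>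

definition rf_nth :: "recf \<Rightarrow> recf" where
  "rf_nth e = Comp rf_add [Comp rf_hd [Comp rf_drop [e, Proj 0]], Comp rf_nonzero [Comp rf_drop [e, Proj 0]]]"

lemma reval_rf_nth:
  assumes e: "computes e (Suc (Suc 0)) I"
  shows "reval (rf_nth e) [c, n] y \<longleftrightarrow> I [c, n] < length (list_decode c) \<and> y = list_decode c ! I [c, n]"
proof -
  define t where "t = (code_tl ^^ I [c, n]) c"
  have "computes (Comp rf_drop [e, Proj 0]) (Suc (Suc 0)) (\<lambda>xs. (code_tl ^^ I xs) (xs ! 0))"
    by (rule computes_cong[OF computes_Comp2[OF computes_rf_drop e computes_Proj]]) auto
  then have drop: "reval (Comp rf_drop [e, Proj 0]) [c, n] z \<longleftrightarrow> z = t" for z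
    by (simp add: computes_def t_def)
  have t: "list_decode t = drop (I [c, n]) (list_decode c)"
    unfolding t_def by (rule list_decode_funpow_code_tl)
  then have t0: "t \<noteq> 0 \<longleftrightarrow> I [c, n] < length (list_decode c)"
    by (metis drop_eq_Nil2 list_decode.simps(1) list_decode_inverse list_encode.simps(1) not_le)
  have hd: "I [c, n] < length (list_decode c) \<Longrightarrow> code_hd t = list_decode c ! I [c, n]"
    using t by (simp add: code_hd_list_decode hd_drop_conv_nth)
  have "reval rf_hd [t] z \<longleftrightarrow> z = code_hd t" "reval rf_add [a, b] z \<longleftrightarrow> z = a + b" for a b z
    using computes_rf_hd computes_rf_add by (simp_all add: computes_def)
  then show ?thesis
    unfolding rf_nth_def reval_Comp2_iff[of rf_add] reval_Comp1_iff drop reval_rf_nonzero using t0 hd by auto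
qed

lemma list_decode_prefix_code: "list_decode (prefix_code p k) = map p [0..<k]"
  by (simp add: prefix_code_def)

lemma computable_reindex:
  assumes e: "computes e (Suc (Suc 0)) (\<lambda>xs. f (xs ! 1))"
  shows "computable (\<lambda>p. Some (p \<circ> f))"
  unfolding computable_def
proof (rule exI[of _ "rf_nth e"], intro allI impI conjI)
  fix p q :: baire assume "Some (p \<circ> f) = Some q"
  then have q: "q = p \<circ> f" by simp
  show "\<exists>k. reval (rf_nth e) [prefix_code p k, n] (q n)" for n
    using reval_rf_nth[OF e] by (intro exI[of _ "Suc (f n)"]) (simp add: list_decode_prefix_code q nth_append)
  show "reval (rf_nth e) [prefix_code p k, n] m \<Longrightarrow> m = q n" for k n m
    using reval_rf_nth[OF e] by (simp add: list_decode_prefix_code q)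
qed

lemma computable_Some: "computable Some"
proof -
  have "computes (Proj 1) (Suc (Suc 0)) (\<lambda>xs. id (xs ! 1))"
    using computes_Proj[of 1 "Suc (Suc 0)"] by simp
  from computable_reindex[OF this] show ?thesis by (simp add: comp_def)
qed

lemma computable_bpair_snd: "computable (\<lambda>t. Some (\<lambda>n. t (Suc (2 * n))))"
proof -
  have "computes (Comp Suc_f [Comp rf_add [Proj 1, Proj 1]]) (Suc (Suc 0)) (\<lambda>xs. Suc (2 * xs ! 1))"
    by (rule computes_cong[OF computes_Comp1[OF computes_Suc
          computes_Comp2[OF computes_rf_add computes_Proj computes_Proj]]]) auto
  from computable_reindex[OF this] show ?thesis by (simp add: comp_def)
qed

lemma realizes_PC_mono:
  "\<delta> \<le> \<epsilon> \<Longrightarrow> realizes (PC X B rp \<mu> \<delta>) G \<Longrightarrow> realizes (PC X B rp \<mu> \<epsilon>) G"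
  unfolding realizes_def PC_def by fastforce

lemma strong_weihrauch_le_PC_mono:
  assumes "\<delta> \<le> \<epsilon>"
  shows "strong_weihrauch_le (PC X B rp \<mu> \<epsilon>) (PC X B rp \<mu> \<delta>)"
  unfolding strong_weihrauch_le_def
  using computable_Some realizes_PC_mono[OF assms] by (intro exI[of _ Some]) auto

lemma weihrauch_le_PC_mono:
  assumes "\<delta> \<le> \<epsilon>"
  shows "weihrauch_le (PC X B rp \<mu> \<epsilon>) (PC X B rp \<mu> \<delta>)"
proof -
  have odd: "(\<lambda>n. bpair p s (Suc (2 * n))) = s" for p s
    by (simp add: bpair_def)
  show ?thesis
    unfolding weihrauch_le_def
    by (rule exI[of _ "\<lambda>t. Some (\<lambda>n. t (Suc (2 * n)))"], rule exI[of _ Some])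
      (use odd computable_Some computable_bpair_snd realizes_PC_mono[OF assms] in auto)
qed

section \<open>Continuity of computable functions\<close>

definition continuous_pfun :: "pfun \<Rightarrow> bool" where
  "continuous_pfun F \<longleftrightarrow> (\<forall>p q N. F p = Some q \<longrightarrow>
      (\<exists>k. \<forall>p' q'. (\<forall>i<k. p' i = p i) \<longrightarrow> F p' = Some q' \<longrightarrow> (\<forall>n<N. q' n = q n)))"

definition continuous_pfun2 :: "(baire \<Rightarrow> baire \<Rightarrow> baire option) \<Rightarrow> bool" where
  "continuous_pfun2 F \<longleftrightarrow> (\<forall>p s q N. F p s = Some q \<longrightarrow>
      (\<exists>k. \<forall>p' s' q'. (\<forall>i<k. p' i = p i \<and> s' i = s i) \<longrightarrow> F p' s' = Some q' \<longrightarrow> (\<forall>n<N. q' n = q n)))"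

lemma prefix_code_cong: "(\<And>i. i < k \<Longrightarrow> p i = p' i) \<Longrightarrow> prefix_code p k = prefix_code p' k"
  unfolding prefix_code_def by (intro arg_cong[where f=list_encode] map_cong) auto

lemma computable_imp_continuous_pfun:
  assumes "computable F"
  shows "continuous_pfun F"
  unfolding continuous_pfun_def
proof (intro allI impI)
  fix p q N assume Fp: "F p = Some q"
  obtain e where e: "\<And>p q. F p = Some q \<Longrightarrow> \<forall>n. \<exists>k. reval e [prefix_code p k, n] (q n)"
    "\<And>p q k n m. F p = Some q \<Longrightarrow> reval e [prefix_code p k, n] m \<Longrightarrow> m = q n"
    using assms unfolding computable_def by blast
  have "\<exists>kn. \<forall>n. reval e [prefix_code p (kn n), n] (q n)"
    using e(1)[OF Fp] by (rule choice)
  then obtain kn where kn: "\<And>n. reval e [prefix_code p (kn n), n] (q n)"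
    by blast
  show "\<exists>k. \<forall>p' q'. (\<forall>i<k. p' i = p i) \<longrightarrow> F p' = Some q' \<longrightarrow> (\<forall>n<N. q' n = q n)"
  proof (intro exI allI impI)
    fix p' q' n assume agree: "\<forall>i<(\<Sum>n<N. kn n). p' i = p i" and Fp': "F p' = Some q'" and "n < N"
    then have "kn n \<le> (\<Sum>n<N. kn n)"
      by (intro member_le_sum) auto
    then have "prefix_code p' (kn n) = prefix_code p (kn n)"
      using agree by (intro prefix_code_cong) auto
    then show "q' n = q n"
      using e(2)[OF Fp', of "kn n" n "q n"] kn[of n] by simp
  qed
qed

lemma continuous_pfun2_bpair:
  assumes "continuous_pfun H"
  shows "continuous_pfun2 (\<lambda>p s. H (bpair p s))"
  unfolding continuous_pfun2_def
proof (intro allI impI)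
  fix p s q N assume "H (bpair p s) = Some q"
  then obtain k where k: "\<forall>t q'. (\<forall>i<k. t i = bpair p s i) \<longrightarrow> H t = Some q' \<longrightarrow> (\<forall>n<N. q' n = q n)"
    using assms unfolding continuous_pfun_def by blast
  have "\<forall>i<k. bpair p' s' i = bpair p s i" if "\<forall>i<k. p' i = p i \<and> s' i = s i" for p' s'
    using that by (auto simp: bpair_def)
  with k show "\<exists>k. \<forall>p' s' q'. (\<forall>i<k. p' i = p i \<and> s' i = s i) \<longrightarrow> H (bpair p' s') = Some q' \<longrightarrow> (\<forall>n<N. q' n = q n)"
    by blast
qed

lemma continuous_pfun2_snd:
  assumes "continuous_pfun H"
  shows "continuous_pfun2 (\<lambda>p s. H s)"
  using assms unfolding continuous_pfun_def continuous_pfun2_def by meson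

definition continuously_reducible :: "('a, 'b) problem \<Rightarrow> ('c, 'd) problem \<Rightarrow> bool" where
  "continuously_reducible f g \<longleftrightarrow> (\<exists>K H. continuous_pfun K \<and> continuous_pfun2 H \<and>
      (\<forall>G. realizes g G \<longrightarrow> realizes f (\<lambda>p. Option.bind (K p) (\<lambda>r. Option.bind (G r) (H p)))))"

lemma weihrauch_le_imp_continuously_reducible:
  assumes "weihrauch_le f g"
  shows "continuously_reducible f g"
proof -
  obtain H K where "computable H" "computable K" and
    red: "\<And>G. realizes g G \<Longrightarrow> realizes f (\<lambda>p. Option.bind (K p) (\<lambda>r. Option.bind (G r) (\<lambda>s. H (bpair p s))))"
    using assms unfolding weihrauch_le_def by blast
  then have "continuous_pfun K" "continuous_pfun2 (\<lambda>p s. H (bpair p s))"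
    by (simp_all add: computable_imp_continuous_pfun continuous_pfun2_bpair)
  with red show ?thesis
    unfolding continuously_reducible_def by blast
qed

lemma strong_weihrauch_le_imp_continuously_reducible:
  assumes "strong_weihrauch_le f g"
  shows "continuously_reducible f g"
proof -
  obtain H K where "computable H" "computable K" and
    red: "\<And>G. realizes g G \<Longrightarrow> realizes f (\<lambda>p. Option.bind (K p) (\<lambda>r. Option.bind (G r) H))"
    using assms unfolding strong_weihrauch_le_def by blast
  then have "continuous_pfun K" "continuous_pfun2 (\<lambda>p s. H s)"
    by (simp_all add: computable_imp_continuous_pfun continuous_pfun2_snd)
  with red show ?thesis
    unfolding continuously_reducible_def by blast
qed

text \<open>Removing a heaviest element repeatedly keeps the average weight at most the
  overall average.\<close>

lemma exists_subset_sum_le_average: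
  fixes a :: "'c \<Rightarrow> real"
  assumes "finite C" and nonneg: "\<And>c. c \<in> C \<Longrightarrow> 0 \<le> a c" and "k \<le> card C"
  shows "\<exists>J\<subseteq>C. card J = k \<and> sum a J * card C \<le> k * sum a C"
  using \<open>k \<le> card C\<close>
proof (induction k rule: inc_induct)
  case base
  show ?case by (intro exI[of _ C]) simp
next
  case (step n)
  then obtain J where J: "J \<subseteq> C" "card J = Suc n" "sum a J * card C \<le> Suc n * sum a C"
    by auto
  have "finite J" "J \<noteq> {}" using J \<open>finite C\<close> finite_subset by auto
  then have "Max (a ` J) \<in> a ` J" by simp
  then obtain m where m: "m \<in> J" "a m = Max (a ` J)" by auto
  have "sum a J \<le> card J * a m"
    using sum_bounded_above[of J a "a m"] m \<open>finite J\<close> by simp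
  moreover have "sum a (J - {m}) * Suc n = sum a J + n * sum a J - a m - n * a m"
    using \<open>finite J\<close> m(1) by (simp add: sum_diff1 algebra_simps)
  ultimately have "sum a (J - {m}) * Suc n \<le> n * sum a J"
    using J(2) by (simp add: algebra_simps)
  then have "sum a (J - {m}) * Suc n * card C \<le> n * sum a J * card C"
    by (simp add: mult_right_mono)
  also have "\<dots> \<le> n * (Suc n * sum a C)"
    using J(3) by (simp add: mult.assoc mult_left_mono)
  finally have "(sum a (J - {m}) * card C) * Suc n \<le> (n * sum a C) * Suc n"
    by (simp add: algebra_simps)
  then have "sum a (J - {m}) * card C \<le> n * sum a C"
    by (rule mult_right_le_imp_le) simp
  moreover have "card (J - {m}) = n" using J(2) m(1) \<open>finite J\<close> by simp
  ultimately show ?case using J(1) by (intro exI[of _ "J - {m}"]) auto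
qed

lemma (in prob_space) exists_heavy_cells:
  assumes C: "finite C" "C \<noteq> {}" "k \<le> card C"
    and S: "S \<in> sets M" "\<And>y. y \<in> S \<Longrightarrow> f y \<in> C" "\<And>c. {y \<in> S. f y = c} \<in> sets M"
  shows "\<exists>W\<subseteq>C. card W + k \<le> card C \<and> measure M S - k / card C \<le> measure M {y \<in> S. f y \<in> W}"
proof -
  define a where "a c = measure M {y \<in> S. f y = c}" for c
  have cells: "measure M {y \<in> S. f y \<in> W} = sum a W" if "W \<subseteq> C" for W
  proof -
    have eq: "{y \<in> S. f y \<in> W} = (\<Union>c\<in>W. {y \<in> S. f y = c})" by auto
    have "finite W" using that C(1) finite_subset by blast
    show ?thesis
      unfolding a_def eq
      by (rule finite_measure_finite_Union) (use \<open>finite W\<close> S(3) in \<open>auto simp: disjoint_family_on_def\<close>)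
  qed
  have "{y \<in> S. f y \<in> C} = S" using S(2) by auto
  then have sumC: "sum a C = measure M S" using cells[of C] by simp
  obtain J where J: "J \<subseteq> C" "card J = k" "sum a J * card C \<le> k * sum a C"
    using exists_subset_sum_le_average[OF C(1) _ C(3), of a] by (auto simp: a_def)
  have "sum a J \<le> k * measure M S / card C"
    using J(3) C by (simp add: sumC pos_le_divide_eq card_gt_0_iff)
  also have "\<dots> \<le> k / card C"
    by (simp add: divide_right_mono mult_left_le)
  finally have "measure M S - k / card C \<le> sum a (C - J)"
    using J(1) C(1) by (simp add: sum_diff finite_subset sumC)
  moreover have "card (C - J) + k \<le> card C"
    using J C by (simp add: card_Diff_subset finite_subset)
  ultimately show ?thesis
    using cells[of "C - J"] by (intro exI[of _ "C - J"]) auto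
qed

lemma (in finite_measure) Int_nonempty_if_measure_sum_gt:
  assumes "A \<in> sets M" "B \<in> sets M" "Z \<in> sets M" "A \<subseteq> Z" "B \<subseteq> Z"
    and "measure M Z < measure M A + measure M B"
  shows "A \<inter> B \<noteq> {}"
proof
  assume "A \<inter> B = {}"
  then have "measure M (A \<union> B) = measure M A + measure M B"
    using assms by (simp add: finite_measure_Union)
  moreover have "measure M (A \<union> B) \<le> measure M Z"
    using assms by (intro finite_measure_mono) auto
  ultimately show False using assms(6) by simp
qed

definition closed_named :: "'x set \<Rightarrow> (nat \<Rightarrow> 'x set) \<Rightarrow> baire \<Rightarrow> 'x set" where
  "closed_named X B p = X - (\<Union>n\<in>{n. p n \<noteq> 0}. B (p n - 1))"

definition closed_named_upto :: "'x set \<Rightarrow> (nat \<Rightarrow> 'x set) \<Rightarrow> baire \<Rightarrow> nat \<Rightarrow> 'x set" where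
  "closed_named_upto X B p N = X - (\<Union>n\<in>{n. n < N \<and> p n \<noteq> 0}. B (p n - 1))"

lemma neg_closed_rep_iff: "neg_closed_rep X B p A \<longleftrightarrow> A = closed_named X B p"
  by (simp add: neg_closed_rep_def closed_named_def)

lemma closed_named_subset: "closed_named X B p \<subseteq> X"
  by (auto simp: closed_named_def)

lemma closed_named_subset_upto:
  assumes "\<And>n. n < N \<Longrightarrow> p' n = p n"
  shows "closed_named X B p' \<subseteq> closed_named_upto X B p N"
proof -
  have "(\<Union>n\<in>{n. n < N \<and> p n \<noteq> 0}. B (p n - 1)) \<subseteq> (\<Union>n\<in>{n. p' n \<noteq> 0}. B (p' n - 1))"
    using assms by (intro UN_least) (metis (mono_tags, lifting) UN_upper mem_Collect_eq)
  then show ?thesis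
    unfolding closed_named_def closed_named_upto_def by blast
qed

lemma exists_name_Diff_Union:
  assumes "finite S"
  shows "\<exists>p. (\<forall>i<M. p i = 0) \<and> closed_named X B p = X - \<Union>(B ` S)"
proof -
  obtain ws where ws: "set ws = S" using finite_list[OF assms] by blast
  define p where "p i = (if M \<le> i \<and> i - M < length ws then Suc (ws ! (i - M)) else 0)" for i
  have "(\<lambda>n. p n - 1) ` {n. p n \<noteq> 0} = S"
  proof (intro equalityI subsetI)
    fix x assume "x \<in> S"
    then obtain j where "j < length ws" "ws ! j = x" using ws by (auto simp: in_set_conv_nth)
    then show "x \<in> (\<lambda>n. p n - 1) ` {n. p n \<noteq> 0}"
      by (intro image_eqI[of _ _ "M + j"]) (auto simp: p_def)
  qed (use ws in \<open>auto simp: p_def split: if_splits\<close>)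
  then have "closed_named X B p = X - \<Union>(B ` S)"
    unfolding closed_named_def by (metis image_image)
  then show ?thesis by (intro exI[of _ p]) (auto simp: p_def)
qed

definition cell_scheme :: "(baire \<Rightarrow> 'x \<Rightarrow> bool) \<Rightarrow> 'x set \<Rightarrow> (nat \<Rightarrow> 'x set) \<Rightarrow> 'x measure \<Rightarrow> real \<Rightarrow>
    nat \<Rightarrow> nat \<Rightarrow> 'c set \<Rightarrow> (nat list \<Rightarrow> 'c) \<Rightarrow> ('c \<Rightarrow> nat) \<Rightarrow> bool" where
  "cell_scheme rp X B \<mu> \<epsilon> L k C cell R \<longleftrightarrow> finite C \<and> k \<le> card C \<and> (\<forall>w. cell w \<in> C) \<and>
    (\<forall>q x. rp q x \<longrightarrow> x \<in> B (R (cell (map q [0..<L])))) \<and>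
    (\<forall>W\<subseteq>C. card W + k \<le> card C \<longrightarrow> \<epsilon> < measure \<mu> (X - (\<Union>c\<in>W. B (R c))))"

lemma cell_scheme_instance:
  assumes "cell_scheme rp X B \<mu> \<epsilon> L k C cell R" "W \<subseteq> C" "card W + k \<le> card C"
  shows "\<exists>p. (\<forall>i<M. p i = 0) \<and> neg_closed_rep X B p (X - (\<Union>c\<in>W. B (R c))) \<and>
    \<epsilon> < measure \<mu> (X - (\<Union>c\<in>W. B (R c)))"
proof -
  have "finite (R ` W)" using assms finite_subset unfolding cell_scheme_def by blast
  from exists_name_Diff_Union[OF this, of M X B] obtain p
    where "\<forall>i<M. p i = 0" "closed_named X B p = X - (\<Union>c\<in>W. B (R c))"
    by (auto simp: image_image)
  with assms show ?thesis
    unfolding cell_scheme_def by (auto simp: neg_closed_rep_iff)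
qed

section \<open>No continuous reduction for \<open>\<epsilon> < \<delta>\<close>\<close>

locale represented_prob_space = prob_space \<mu> for \<mu> :: "'x measure" +
  fixes X :: "'x set" and B :: "nat \<Rightarrow> 'x set" and rp :: "baire \<Rightarrow> 'x \<Rightarrow> bool"
    and name :: "'x \<Rightarrow> baire" and \<nu> :: "'x measure"
  assumes space_eq: "space \<mu> = X"
    and sets_basic: "\<And>n. B n \<in> sets \<mu>"
    and sets_name_prefix: "\<And>M P. {y \<in> X. P (map (name y) [0..<M])} \<in> sets \<mu>"
    and rp_name: "\<And>y. y \<in> X \<Longrightarrow> rp (name y) y"
    and measure_\<nu>: "\<And>A. A \<in> sets \<mu> \<Longrightarrow> measure \<nu> A = measure \<mu> A"
begin

lemma sets_X: "X \<in> sets \<mu>"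
  unfolding space_eq[symmetric] by simp

lemma sets_closed_named: "closed_named X B p \<in> sets \<mu>"
proof -
  have "(\<Union>n\<in>{n. p n \<noteq> 0}. B (p n - 1)) \<in> sets \<mu>"
    by (intro sets.countable_UN'') (auto simp: sets_basic)
  then show ?thesis
    unfolding closed_named_def using sets_X by blast
qed

lemma sets_closed_named_upto: "closed_named_upto X B p N \<in> sets \<mu>"
proof -
  have "(\<Union>n\<in>{n. n < N \<and> p n \<noteq> 0}. B (p n - 1)) \<in> sets \<mu>"
    by (intro sets.countable_UN'') (auto simp: sets_basic)
  then show ?thesis
    unfolding closed_named_upto_def using sets_X by blast
qed

lemma closed_named_upto_approx:
  assumes "\<gamma> > 0"
  shows "\<exists>N. measure \<mu> (closed_named_upto X B p N) < measure \<mu> (closed_named X B p) + \<gamma>"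
proof -
  have "decseq (closed_named_upto X B p)"
    unfolding decseq_def closed_named_upto_def by (auto dest: order.strict_trans2)
  moreover have "(\<Inter>N. closed_named_upto X B p N) = closed_named X B p"
    unfolding closed_named_def closed_named_upto_def by auto
  ultimately have "(\<lambda>N. measure \<mu> (closed_named_upto X B p N)) \<longlonglongrightarrow> measure \<mu> (closed_named X B p)"
    using finite_Lim_measure_decseq[of "closed_named_upto X B p"] sets_closed_named_upto by auto
  from order_tendstoD(2)[OF this, of "measure \<mu> (closed_named X B p) + \<gamma>"] assms show ?thesis
    by (auto simp: eventually_sequentially)
qed

text \<open>Since the first \<open>L\<close> output symbols of a continuous \<open>H\<close> depend on finitely many input symbols,
  most points of \<open>A\<close> have a name whose prefix of some fixed length \<open>M\<close> already determines them.\<close>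

lemma continuous_output_prefix_approx:
  assumes H: "continuous_pfun2 H" and A: "A \<in> sets \<mu>" "\<And>y. y \<in> A \<Longrightarrow> H p (name y) \<noteq> None"
    and "\<gamma> > 0"
  shows "\<exists>M\<ge>M0. \<exists>P out. measure \<mu> A - \<gamma> < measure \<mu> (A \<inter> {y \<in> X. P (map (name y) [0..<M])}) \<and>
    (\<forall>y\<in>X. P (map (name y) [0..<M]) \<longrightarrow> (\<forall>p' q. (\<forall>i<M. p' i = p i) \<longrightarrow> H p' (name y) = Some q \<longrightarrow>
        map q [0..<L] = out (map (name y) [0..<M])))"
proof -
  define fixes_output where "fixes_output M w v \<longleftrightarrow> (\<forall>p' s q. (\<forall>i<M. p' i = p i \<and> s i = w ! i) \<longrightarrow>
      H p' s = Some q \<longrightarrow> map q [0..<L] = v)" for M w v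
  define S where "S M = A \<inter> {y \<in> X. \<exists>v. fixes_output M (map (name y) [0..<M]) v}" for M
  have prefix: "(\<forall>i<M. p' i = p i \<and> s i = map (name y) [0..<M] ! i) \<longleftrightarrow>
      (\<forall>i<M. p' i = p i \<and> s i = name y i)" for M s p' y
    by auto
  have "S m \<subseteq> S n" if "m \<le> n" for m n
  proof -
    have "fixes_output n (map (name y) [0..<n]) v" if "fixes_output m (map (name y) [0..<m]) v" for y v
      using that \<open>m \<le> n\<close> unfolding fixes_output_def prefix by (meson order.strict_trans2)
    then show ?thesis unfolding S_def by blast
  qed
  then have "incseq S" by (rule monoI)
  have "A \<subseteq> (\<Union>M. S M)"
  proof
    fix y assume "y \<in> A"
    then obtain q where q: "H p (name y) = Some q" using A(2) by blast
    then obtain k where k: "\<forall>p' s q'. (\<forall>i<k. p' i = p i \<and> s i = name y i) \<longrightarrow> H p' s = Some q' \<longrightarrow>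
        (\<forall>n<L. q' n = q n)"
      using H unfolding continuous_pfun2_def by blast
    have "fixes_output k (map (name y) [0..<k]) (map q [0..<L])"
      unfolding fixes_output_def prefix using k by auto
    moreover have "y \<in> X" using \<open>y \<in> A\<close> A(1) sets.sets_into_space space_eq by blast
    ultimately show "y \<in> (\<Union>M. S M)" using \<open>y \<in> A\<close> unfolding S_def by blast
  qed
  then have "(\<Union>M. S M) = A" unfolding S_def by blast
  moreover have "S M \<in> sets \<mu>" for M
    unfolding S_def using A(1) sets_name_prefix[of "\<lambda>w. \<exists>v. fixes_output M w v" M] by blast
  ultimately have "(\<lambda>M. measure \<mu> (S M)) \<longlonglongrightarrow> measure \<mu> A"
    using finite_Lim_measure_incseq[of S] \<open>incseq S\<close> by auto
  from order_tendstoD(1)[OF this, of "measure \<mu> A - \<gamma>"] \<open>\<gamma> > 0\<close>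
  obtain M' where M': "\<And>M. M' \<le> M \<Longrightarrow> measure \<mu> A - \<gamma> < measure \<mu> (S M)"
    by (auto simp: eventually_sequentially)
  define M where "M = max M0 M'"
  define out where "out w = (SOME v. fixes_output M w v)" for w
  have "map q [0..<L] = out (map (name y) [0..<M])"
    if "\<exists>v. fixes_output M (map (name y) [0..<M]) v" "\<forall>i<M. p' i = p i" "H p' (name y) = Some q"
    for y p' q
  proof -
    have "fixes_output M (map (name y) [0..<M]) (out (map (name y) [0..<M]))"
      using someI_ex[OF that(1)] unfolding out_def .
    then show ?thesis
      using that(2,3) unfolding fixes_output_def prefix by blast
  qed
  moreover have "measure \<mu> A - \<gamma> < measure \<mu> (S M)" "M0 \<le> M"
    using M'[of M] by (simp_all add: M_def)
  ultimately show ?thesis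
    unfolding S_def
    by (intro exI[of _ M] conjI exI[of _ "\<lambda>w. \<exists>v. fixes_output M w v"] exI[of _ out]) blast+
qed

lemma realizes_PC_if_names:
  assumes "\<And>r. \<delta> < measure \<mu> (closed_named X B r) \<Longrightarrow> \<exists>y\<in>closed_named X B r. G r = Some (name y)"
  shows "realizes (PC X B rp \<nu> \<delta>) G"
  unfolding realizes_def
proof (intro allI impI)
  fix r A assume rA: "rep_in (PC X B rp \<nu> \<delta>) r A \<and> A \<in> pdom (PC X B rp \<nu> \<delta>)"
  then have A: "A = closed_named X B r"
    by (simp add: PC_def neg_closed_rep_iff)
  have "\<delta> < measure \<nu> A"
    using rA by (simp add: PC_def)
  then have "\<delta> < measure \<mu> (closed_named X B r)"
    unfolding A by (simp add: measure_\<nu> sets_closed_named)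
  from assms[OF this] obtain y where y: "y \<in> closed_named X B r" "G r = Some (name y)" ..
  moreover have "rp (name y) y"
    using y(1) closed_named_subset rp_name by (meson subsetD)
  ultimately show "\<exists>q y. G r = Some q \<and> rep_out (PC X B rp \<nu> \<delta>) q y \<and> y \<in> pval (PC X B rp \<nu> \<delta>) A"
    unfolding A by (intro exI[of _ "name y"] exI[of _ y]) (simp add: PC_def)
qed

text \<open>Testing a reduction against realizers that answer a single name adversarially.\<close>

lemma reduction_output:
  assumes red: "\<And>G. realizes (PC X B rp \<nu> \<delta>) G \<Longrightarrow>
      realizes (PC X B rp \<nu> \<epsilon>) (\<lambda>p. Option.bind (K p) (\<lambda>r. Option.bind (G r) (H p)))"
    and "0 \<le> \<delta>" and A: "neg_closed_rep X B p A" "\<epsilon> < measure \<mu> A"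
  shows "\<exists>r. K p = Some r \<and> \<delta> < measure \<mu> (closed_named X B r) \<and>
    (\<forall>y\<in>closed_named X B r. \<exists>q x. H p (name y) = Some q \<and> rp q x \<and> x \<in> A)"
proof -
  have "A \<in> pdom (PC X B rp \<nu> \<epsilon>)" "rep_in (PC X B rp \<nu> \<epsilon>) p A"
    using A by (simp_all add: PC_def neg_closed_rep_iff measure_\<nu> sets_closed_named)
  then have solves: "\<exists>q x. Option.bind (K p) (\<lambda>r. Option.bind (G r) (H p)) = Some q \<and> rp q x \<and> x \<in> A"
    if "realizes (PC X B rp \<nu> \<delta>) G" for G
    using red[OF that] unfolding realizes_def by (simp add: PC_def)
  define G0 where "G0 r = Some (name (SOME y. y \<in> closed_named X B r))" for r
  have G0: "\<exists>y\<in>closed_named X B r. G0 r = Some (name y)" if "\<delta> < measure \<mu> (closed_named X B r)" for r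
  proof -
    have "closed_named X B r \<noteq> {}" using that \<open>0 \<le> \<delta>\<close> by auto
    then have "(SOME y. y \<in> closed_named X B r) \<in> closed_named X B r"
      by (simp add: some_in_eq)
    then show ?thesis unfolding G0_def by blast
  qed
  obtain r where r: "K p = Some r"
    using solves[OF realizes_PC_if_names[OF G0]] by (cases "K p") auto
  have "\<delta> < measure \<mu> (closed_named X B r)"
  proof (rule ccontr)
    assume "\<not> ?thesis"
    then have "realizes (PC X B rp \<nu> \<delta>) (G0(r := None))"
      using G0 by (intro realizes_PC_if_names) auto
    from solves[OF this] show False using r by simp
  qed
  moreover have "\<exists>q x. H p (name y) = Some q \<and> rp q x \<and> x \<in> A" if "y \<in> closed_named X B r" for y
  proof -
    have "realizes (PC X B rp \<nu> \<delta>) (G0(r := Some (name y)))"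
      using G0 that by (intro realizes_PC_if_names) auto
    from solves[OF this] show ?thesis using r by simp
  qed
  ultimately show ?thesis using r by blast
qed

lemma continuous_reduction_trap:
  assumes K: "continuous_pfun K" and H: "continuous_pfun2 H"
    and r0: "K p0 = Some r0" "\<And>y. y \<in> closed_named X B r0 \<Longrightarrow> H p0 (name y) \<noteq> None"
    and C: "finite C" "k \<le> card C" "\<And>w. cell w \<in> C" and "\<gamma> > 0"
  shows "\<exists>N M W T. W \<subseteq> C \<and> card W + k \<le> card C \<and> T \<in> sets \<mu> \<and> T \<subseteq> closed_named_upto X B r0 N \<and>
    measure \<mu> (closed_named_upto X B r0 N) - 2 * \<gamma> - k / card C < measure \<mu> T \<and>
    (\<forall>p r. (\<forall>i<M. p i = p0 i) \<longrightarrow> K p = Some r \<longrightarrow> closed_named X B r \<subseteq> closed_named_upto X B r0 N) \<and>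
    (\<forall>y\<in>T. \<forall>p q. (\<forall>i<M. p i = p0 i) \<longrightarrow> H p (name y) = Some q \<longrightarrow> cell (map q [0..<L]) \<in> W)"
proof -
  define Z where "Z = closed_named X B r0"
  obtain N where N: "measure \<mu> (closed_named_upto X B r0 N) < measure \<mu> Z + \<gamma>"
    using closed_named_upto_approx[OF \<open>\<gamma> > 0\<close>] unfolding Z_def by blast
  obtain M0 where M0: "\<forall>p r. (\<forall>i<M0. p i = p0 i) \<longrightarrow> K p = Some r \<longrightarrow> (\<forall>n<N. r n = r0 n)"
    using K r0(1) unfolding continuous_pfun_def by blast
  obtain M P out where "M0 \<le> M" and
    S: "measure \<mu> Z - \<gamma> < measure \<mu> (Z \<inter> {y \<in> X. P (map (name y) [0..<M])})" and
    out: "\<forall>y\<in>X. P (map (name y) [0..<M]) \<longrightarrow> (\<forall>p q. (\<forall>i<M. p i = p0 i) \<longrightarrow>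
      H p (name y) = Some q \<longrightarrow> map q [0..<L] = out (map (name y) [0..<M]))"
    using continuous_output_prefix_approx[OF H sets_closed_named _ \<open>\<gamma> > 0\<close>, of r0 p0 M0 L] r0(2)
    unfolding Z_def by blast
  define S where "S = Z \<inter> {y \<in> X. P (map (name y) [0..<M])}"
  define cell_of where "cell_of y = cell (out (map (name y) [0..<M]))" for y
  have prefix_sets: "Z \<inter> {y \<in> X. Q (map (name y) [0..<M])} \<in> sets \<mu>" for Q
    unfolding Z_def using sets_closed_named sets_name_prefix by blast
  have "{y \<in> S. Q (cell_of y)} = Z \<inter> {y \<in> X. P (map (name y) [0..<M]) \<and> Q (cell (out (map (name y) [0..<M])))}"
    for Q unfolding S_def cell_of_def by auto
  then have sets_cells: "{y \<in> S. Q (cell_of y)} \<in> sets \<mu>" for Q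
    using prefix_sets by simp
  have "S \<in> sets \<mu>"
    using prefix_sets unfolding S_def .
  have "{y \<in> S. cell_of y = c} \<in> sets \<mu>" for c
    using sets_cells[of "\<lambda>d. d = c"] by simp
  then obtain W where W: "W \<subseteq> C" "card W + k \<le> card C" and
    T: "measure \<mu> S - k / card C \<le> measure \<mu> {y \<in> S. cell_of y \<in> W}"
    using exists_heavy_cells[OF C(1) _ C(2) \<open>S \<in> sets \<mu>\<close>, of cell_of] C(3) unfolding cell_of_def by blast
  have "Z \<subseteq> closed_named_upto X B r0 N"
    unfolding Z_def by (rule closed_named_subset_upto) simp
  moreover have "closed_named X B r \<subseteq> closed_named_upto X B r0 N"
    if "\<forall>i<M. p i = p0 i" "K p = Some r" for p r
  proof -
    have "\<forall>i<M0. p i = p0 i" using that(1) \<open>M0 \<le> M\<close> by simp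
    then show ?thesis using M0 that(2) by (intro closed_named_subset_upto) blast
  qed
  moreover have "cell (map q [0..<L]) \<in> W"
    if "y \<in> S" "cell_of y \<in> W" "\<forall>i<M. p i = p0 i" "H p (name y) = Some q" for y p q
    using out that unfolding S_def cell_of_def by auto
  ultimately show ?thesis
    using N S[folded S_def] T W sets_cells[of "\<lambda>d. d \<in> W"]
    by (intro exI[of _ N] exI[of _ M] exI[of _ W] exI[of _ "{y \<in> S. cell_of y \<in> W}"]) (auto simp: S_def)
qed

theorem not_continuously_reducible_PC:
  assumes "0 \<le> \<epsilon>" "\<epsilon> < \<delta>" "\<epsilon> < 1"
    and schemes: "\<And>\<gamma>. \<gamma> > 0 \<Longrightarrow>
      \<exists>L k (C :: 'c set) cell R. cell_scheme rp X B \<mu> \<epsilon> L k C cell R \<and> k / card C < \<epsilon> + \<gamma>"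
  shows "\<not> continuously_reducible (PC X B rp \<nu> \<epsilon>) (PC X B rp \<nu> \<delta>)"
proof
  assume "continuously_reducible (PC X B rp \<nu> \<epsilon>) (PC X B rp \<nu> \<delta>)"
  then obtain K H where K: "continuous_pfun K" and H: "continuous_pfun2 H" and
    red: "\<forall>G. realizes (PC X B rp \<nu> \<delta>) G \<longrightarrow>
      realizes (PC X B rp \<nu> \<epsilon>) (\<lambda>p. Option.bind (K p) (\<lambda>r. Option.bind (G r) (H p)))"
    unfolding continuously_reducible_def by blast
  have solution: "\<exists>r. K p = Some r \<and> \<delta> < measure \<mu> (closed_named X B r) \<and>
      (\<forall>y\<in>closed_named X B r. \<exists>q x. H p (name y) = Some q \<and> rp q x \<and> x \<in> A)"
    if "neg_closed_rep X B p A" "\<epsilon> < measure \<mu> A" for p A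
    by (rule reduction_output[where K=K and H=H and p=p and A=A and \<delta>=\<delta> and \<epsilon>=\<epsilon>])
      (use red that assms in auto)
  define \<gamma> where "\<gamma> = (\<delta> - \<epsilon>) / 4"
  have "\<gamma> > 0" using assms by (simp add: \<gamma>_def)
  then obtain L k and C :: "'c set" and cell R where scheme: "cell_scheme rp X B \<mu> \<epsilon> L k C cell R"
    and k: "k / card C < \<epsilon> + \<gamma>"
    using schemes by blast
  then have C: "finite C" "k \<le> card C" "\<And>w. cell w \<in> C" and
    cover: "\<And>q x. rp q x \<Longrightarrow> x \<in> B (R (cell (map q [0..<L])))"
    unfolding cell_scheme_def by blast+
  define p0 :: baire where "p0 = (\<lambda>_. 0)"
  have "neg_closed_rep X B p0 X" by (simp add: neg_closed_rep_def p0_def)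
  moreover have "\<epsilon> < measure \<mu> X" using assms prob_space space_eq by simp
  ultimately obtain r0 where r0: "K p0 = Some r0"
    "\<forall>y\<in>closed_named X B r0. \<exists>q x. H p0 (name y) = Some q \<and> rp q x \<and> x \<in> X"
    using solution by blast
  have "H p0 (name y) \<noteq> None" if "y \<in> closed_named X B r0" for y
    using r0(2) that by fastforce
  note trap = continuous_reduction_trap[where K=K and H=H and C=C and k=k and cell=cell
      and \<gamma>=\<gamma> and L=L, OF K H r0(1) this C \<open>\<gamma> > 0\<close>]
  obtain N M W T where W: "W \<subseteq> C" "card W + k \<le> card C" and T: "T \<in> sets \<mu>" "T \<subseteq> closed_named_upto X B r0 N"
      "measure \<mu> (closed_named_upto X B r0 N) - 2 * \<gamma> - k / card C < measure \<mu> T" and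
    K_trap: "\<forall>p r. (\<forall>i<M. p i = p0 i) \<longrightarrow> K p = Some r \<longrightarrow> closed_named X B r \<subseteq> closed_named_upto X B r0 N" and
    H_trap: "\<forall>y\<in>T. \<forall>p q. (\<forall>i<M. p i = p0 i) \<longrightarrow> H p (name y) = Some q \<longrightarrow> cell (map q [0..<L]) \<in> W"
    using trap by blast
  define A where "A = X - (\<Union>c\<in>W. B (R c))"
  obtain p where p: "\<forall>i<M. p i = p0 i" "neg_closed_rep X B p A" "\<epsilon> < measure \<mu> A"
    using cell_scheme_instance[OF scheme W] unfolding A_def p0_def by blast
  then obtain r where r: "K p = Some r" "\<delta> < measure \<mu> (closed_named X B r)"
    "\<forall>y\<in>closed_named X B r. \<exists>q x. H p (name y) = Some q \<and> rp q x \<and> x \<in> A"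
    using solution p(2,3) by blast
  have "measure \<mu> (closed_named_upto X B r0 N) < measure \<mu> (closed_named X B r) + measure \<mu> T"
  proof -
    have "\<delta> - \<epsilon> = 4 * \<gamma>" by (simp add: \<gamma>_def)
    then show ?thesis using T(3) k r(2) \<open>\<gamma> > 0\<close> by linarith
  qed
  moreover have "closed_named X B r \<subseteq> closed_named_upto X B r0 N"
    using K_trap p(1) r(1) by blast
  ultimately have "closed_named X B r \<inter> T \<noteq> {}"
    using T sets_closed_named sets_closed_named_upto by (intro Int_nonempty_if_measure_sum_gt)
  then obtain y q x where "y \<in> T" "H p (name y) = Some q" "rp q x" "x \<in> A"
    using r(3) by blast
  then have "cell (map q [0..<L]) \<in> W" "x \<in> B (R (cell (map q [0..<L])))" "x \<in> A"
    using H_trap p(1) cover by blast+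
  then show False
    unfolding A_def by blast
qed

theorem weihrauch_le_PC_iff:
  assumes "\<epsilon> \<in> {0..1}" "\<delta> \<in> {0..1}"
    and schemes: "\<And>\<gamma>. \<epsilon> < 1 \<Longrightarrow> \<gamma> > 0 \<Longrightarrow>
      \<exists>L k (C :: 'c set) cell R. cell_scheme rp X B \<mu> \<epsilon> L k C cell R \<and> k / card C < \<epsilon> + \<gamma>"
  shows "(weihrauch_le (PC X B rp \<nu> \<epsilon>) (PC X B rp \<nu> \<delta>) \<longleftrightarrow> \<delta> \<le> \<epsilon>) \<and>
    (strong_weihrauch_le (PC X B rp \<nu> \<epsilon>) (PC X B rp \<nu> \<delta>) \<longleftrightarrow> \<delta> \<le> \<epsilon>)"
proof (cases "\<delta> \<le> \<epsilon>")
  case True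
  then show ?thesis
    using weihrauch_le_PC_mono[OF True, of X B rp \<nu>] strong_weihrauch_le_PC_mono[OF True, of X B rp \<nu>]
    by simp
next
  case False
  then have "\<not> continuously_reducible (PC X B rp \<nu> \<epsilon>) (PC X B rp \<nu> \<delta>)"
    using assms by (intro not_continuously_reducible_PC) auto
  then show ?thesis
    using False weihrauch_le_imp_continuously_reducible[of "PC X B rp \<nu> \<epsilon>" "PC X B rp \<nu> \<delta>"]
      strong_weihrauch_le_imp_continuously_reducible[of "PC X B rp \<nu> \<epsilon>" "PC X B rp \<nu> \<delta>"]
    by blast
qed

end

lemma exists_dyadic_count:
  fixes \<epsilon> \<gamma> :: real
  assumes "0 \<le> \<epsilon>" "\<epsilon> < 1" "\<gamma> > 0"
  shows "\<exists>N k::nat. k \<le> (2::nat) ^ N \<and> \<epsilon> * 2 ^ N < k \<and> k / 2 ^ N < \<epsilon> + \<gamma>"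
proof -
  obtain N where N: "(1/2::real) ^ N < \<gamma>"
    using real_arch_pow_inv[OF \<open>\<gamma> > 0\<close>, of "1/2"] by auto
  define k where "k = nat \<lfloor>\<epsilon> * 2 ^ N\<rfloor> + 1"
  have k: "real k = of_int \<lfloor>\<epsilon> * 2 ^ N\<rfloor> + 1"
    using assms by (simp add: k_def)
  have "\<epsilon> * 2 ^ N < 2 ^ N" using assms by simp
  then have "\<lfloor>\<epsilon> * 2 ^ N\<rfloor> < 2 ^ N"
    by (metis floor_less_iff of_int_numeral of_int_power)
  then have "nat \<lfloor>\<epsilon> * 2 ^ N\<rfloor> < 2 ^ N"
    using nat_less_iff[of "\<lfloor>\<epsilon> * 2 ^ N\<rfloor>" "2 ^ N"] assms by simp
  from Suc_leI[OF this] have "k \<le> 2 ^ N" by (simp add: k_def)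
  moreover have "\<epsilon> * 2 ^ N < k" "k \<le> \<epsilon> * 2 ^ N + 1"
    unfolding k by linarith+
  moreover have "k / 2 ^ N < \<epsilon> + \<gamma>"
  proof -
    have "k / 2 ^ N \<le> (\<epsilon> * 2 ^ N + 1) / 2 ^ N"
      using \<open>k \<le> \<epsilon> * 2 ^ N + 1\<close> by (simp add: divide_right_mono)
    also have "\<dots> = \<epsilon> + (1/2) ^ N"
      by (simp add: field_simps power_divide)
    finally show ?thesis using N by simp
  qed
  ultimately show ?thesis by blast
qed

lemma (in prob_space) cell_scheme_if_cells_small:
  fixes b :: real
  assumes "space M = X" "finite C" "k \<le> card C" "\<And>w. cell w \<in> C"
    and "\<And>q x. rp q x \<Longrightarrow> x \<in> B (R (cell (map q [0..<L])))"
    and "\<And>c. c \<in> C \<Longrightarrow> B (R c) \<in> events" "\<And>c. c \<in> C \<Longrightarrow> prob (B (R c)) \<le> b"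
    and "\<epsilon> < 1 - real (card C - k) * b"
  shows "cell_scheme rp X B M \<epsilon> L k C cell R"
  unfolding cell_scheme_def
proof (intro conjI allI impI)
  fix W assume W: "W \<subseteq> C" "card W + k \<le> card C"
  have "finite W" using W(1) assms(2) finite_subset by blast
  have "0 \<le> b" using assms(7)[OF assms(4)[of "[]"]] measure_nonneg order_trans by blast
  have "prob (\<Union>c\<in>W. B (R c)) \<le> (\<Sum>c\<in>W. prob (B (R c)))"
    using \<open>finite W\<close> W(1) assms(6) by (intro finite_measure_subadditive_finite) auto
  also have "\<dots> \<le> real (card W) * b"
    using sum_bounded_above[of W "\<lambda>c. prob (B (R c))" b] W(1) assms(7) by auto
  also have "\<dots> \<le> real (card C - k) * b"
    using W(2) \<open>0 \<le> b\<close> by (intro mult_right_mono) auto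
  finally have "\<epsilon> < 1 - prob (\<Union>c\<in>W. B (R c))" using assms(8) by simp
  also have "1 - prob (\<Union>c\<in>W. B (R c)) = prob (X - (\<Union>c\<in>W. B (R c)))"
    using \<open>finite W\<close> W(1) assms(1,6) by (subst prob_compl[symmetric]) auto
  finally show "\<epsilon> < prob (X - (\<Union>c\<in>W. B (R c)))" .
qed (use assms in auto)

lemma sets_Collect_prefix:
  fixes f :: "'a \<Rightarrow> nat \<Rightarrow> 'b::countable"
  assumes "\<And>i a. {y \<in> space M. f y i = a} \<in> sets M"
  shows "{y \<in> space M. P (map (f y) [0..<n])} \<in> sets M"
proof -
  have cylinder: "{y \<in> space M. \<forall>i<n. f y i = w ! i} \<in> sets M" for w
  proof (induction n)
    case (Suc n)
    have "{y \<in> space M. \<forall>i<Suc n. f y i = w ! i} =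
        {y \<in> space M. \<forall>i<n. f y i = w ! i} \<inter> {y \<in> space M. f y n = w ! n}"
      by (auto simp: less_Suc_eq)
    then show ?case using Suc assms by auto
  qed simp
  have prefix: "map (f y) [0..<length w] = w" if "\<forall>i<length w. f y i = w ! i" for y w
    using that by (intro nth_equalityI) auto
  have "{y \<in> space M. P (map (f y) [0..<n])} =
      (\<Union>w\<in>{w. P w \<and> length w = n}. {y \<in> space M. \<forall>i<n. f y i = w ! i})"
    by (auto simp: prefix)
  also have "\<dots> \<in> sets M"
    by (rule sets.countable_UN''[OF countableI_type cylinder])
  finally show ?thesis .
qed

section \<open>Cantor space\<close>

lemma prob_space_cantor_measure: "prob_space cantor_measure"
  unfolding cantor_measure_def by (rule prob_space_PiM) (simp add: prob_space_measure_pmf)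

lemma space_cantor_measure: "space cantor_measure = UNIV"
  by (auto simp: cantor_measure_def space_PiM PiE_def extensional_def)

lemma sets_cantor_coordinate: "{y \<in> space cantor_measure. y i = b} \<in> sets cantor_measure"
proof -
  have "(\<lambda>y. y i) \<in> measurable cantor_measure (measure_pmf (bernoulli_pmf (1/2)))"
    unfolding cantor_measure_def by (rule measurable_component_singleton) simp
  from measurable_sets[OF this, of "{b}"] show ?thesis
    by (simp add: vimage_def Int_def conj_commute)
qed

lemma measure_cantor_cylinder: "measure cantor_measure {x. \<forall>i<N. x i = w ! i} = (1/2) ^ N"
proof -
  interpret product_prob_space "\<lambda>_::nat. measure_pmf (bernoulli_pmf (1/2))" UNIV
    by unfold_locales
  have cylinder: "prod_emb UNIV (\<lambda>_. measure_pmf (bernoulli_pmf (1/2))) {..<N} (\<Pi>\<^sub>E i\<in>{..<N}. {w ! i}) =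
      {x. \<forall>i<N. x i = w ! i}"
    by (auto simp: prod_emb_iff PiE_iff)
  have "emeasure cantor_measure {x. \<forall>i<N. x i = w ! i} =
      (\<Prod>i<N. emeasure (measure_pmf (bernoulli_pmf (1/2))) {w ! i})"
    unfolding cantor_measure_def cylinder[symmetric] by (rule emeasure_PiM_emb) auto
  also have "\<dots> = (\<Prod>i<N. ennreal (1/2))"
    by (intro prod.cong refl) (simp add: emeasure_pmf_single)
  also have "\<dots> = ennreal (1/2) ^ N"
    by simp
  also have "\<dots> = ennreal ((1/2) ^ N)"
    by (rule ennreal_power) simp
  finally show ?thesis by (simp add: measure_def)
qed

definition cantor_name :: "(nat \<Rightarrow> bool) \<Rightarrow> baire" where
  "cantor_name y = (\<lambda>i. if y i then 1 else 0)"

definition cantor_word_code :: "bool list \<Rightarrow> nat" where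
  "cantor_word_code w = list_encode (map (\<lambda>b. if b then 1 else 0) w)"

lemma cantor_basic_word_code: "cantor_basic (cantor_word_code w) = {x. \<forall>i<length w. x i = w ! i}"
proof -
  have "cantor_word (cantor_word_code w) = w"
    unfolding cantor_word_def cantor_word_code_def by (induction w) auto
  then show ?thesis by (simp add: cantor_basic_def)
qed

lemma represented_prob_space_cantor:
  "represented_prob_space cantor_measure UNIV cantor_basic cantor_rep cantor_name cantor_measure"
proof -
  have coordinates: "{y \<in> space cantor_measure. cantor_name y i = a} \<in> sets cantor_measure" for i a
  proof -
    have "{y \<in> space cantor_measure. cantor_name y i = a} =
        (if a = 1 then {y \<in> space cantor_measure. y i} else if a = 0 then {y \<in> space cantor_measure. \<not> y i} else {})"
      by (auto simp: cantor_name_def)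
    then show ?thesis using sets_cantor_coordinate[of i True] sets_cantor_coordinate[of i False] by simp
  qed
  show ?thesis
  proof (rule represented_prob_space.intro[OF prob_space_cantor_measure], unfold_locales)
    show "cantor_basic n \<in> sets cantor_measure" for n
    proof -
      define w where "w = cantor_word n"
      have "cantor_basic n =
          {y \<in> space cantor_measure. \<forall>i<length w. map y [0..<length w] ! i = w ! i}"
        by (simp add: cantor_basic_def space_cantor_measure w_def)
      then show ?thesis
        using sets_Collect_prefix[where M=cantor_measure and f="\<lambda>y i. y i" and n="length w"
            and P="\<lambda>v. \<forall>i<length w. v ! i = w ! i"] sets_cantor_coordinate
        by simp
    qed
    show "{y \<in> UNIV. P (map (cantor_name y) [0..<M])} \<in> sets cantor_measure" for M P
      using sets_Collect_prefix[OF coordinates] by (simp add: space_cantor_measure)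
    show "cantor_rep (cantor_name y) y" for y
      by (auto simp: cantor_rep_def cantor_name_def)
  qed (simp_all add: space_cantor_measure)
qed

lemma cantor_cell_scheme:
  assumes "0 \<le> \<epsilon>" "\<epsilon> < 1" "\<gamma> > 0"
  shows "\<exists>L k (C :: bool list set) cell R.
    cell_scheme cantor_rep UNIV cantor_basic cantor_measure \<epsilon> L k C cell R \<and> k / card C < \<epsilon> + \<gamma>"
proof -
  interpret represented_prob_space cantor_measure UNIV cantor_basic cantor_rep cantor_name cantor_measure
    by (rule represented_prob_space_cantor)
  obtain N k where k: "k \<le> (2::nat) ^ N" "\<epsilon> * 2 ^ N < k" "k / 2 ^ N < \<epsilon> + \<gamma>"
    using exists_dyadic_count[OF assms] by blast
  define C where "C = {w :: bool list. length w = N}"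
  have C: "finite C" "card C = 2 ^ N"
    using finite_lists_length_eq[of "UNIV :: bool set" N] card_lists_length_eq[of "UNIV :: bool set" N]
    by (simp_all add: C_def)
  define cell where "cell l = map (\<lambda>i. l ! i = 1) [0..<N]" for l :: "nat list"
  have "cell_scheme cantor_rep UNIV cantor_basic cantor_measure \<epsilon> N k C cell cantor_word_code"
  proof (rule cell_scheme_if_cells_small[where b="(1/2) ^ N"])
    show "x \<in> cantor_basic (cantor_word_code (cell (map q [0..<N])))" if "cantor_rep q x" for q x
      using that by (simp add: cantor_rep_def cell_def cantor_basic_word_code)
    show "measure cantor_measure (cantor_basic (cantor_word_code c)) \<le> (1/2) ^ N" if "c \<in> C" for c
      using that by (simp add: C_def cantor_basic_word_code measure_cantor_cylinder)
    have "1 - real (card C - k) * (1/2) ^ N = k / 2 ^ N"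
      using k(1) C(2) by (simp add: of_nat_diff field_simps power_divide)
    then show "\<epsilon> < 1 - real (card C - k) * (1/2) ^ N"
      using k(2) by (simp add: pos_less_divide_eq)
  qed (use C k sets_basic in \<open>auto simp: space_cantor_measure C_def cell_def\<close>)
  then show ?thesis
    using k(3) C(2) by (intro exI) auto
qed

section \<open>The unit interval\<close>

definition unit_measure :: "real measure" where
  "unit_measure = restrict_space lborel {0..1}"

lemma prob_space_unit_measure: "prob_space unit_measure"
  unfolding unit_measure_def by (rule prob_space_restrict_space) auto

lemma space_unit_measure: "space unit_measure = {0..1}"
  by (simp add: unit_measure_def space_restrict_space)

lemma sets_unit_measure_iff: "A \<in> sets unit_measure \<longleftrightarrow> A \<subseteq> {0..1} \<and> A \<in> sets borel"
  unfolding unit_measure_def by (subst sets_restrict_space_iff) auto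

lemma measure_unit_measure: "A \<in> sets unit_measure \<Longrightarrow> measure lborel A = measure unit_measure A"
  unfolding unit_measure_def by (subst measure_restrict_space) (auto simp: sets_unit_measure_iff[unfolded unit_measure_def])

definition rat_code :: "int \<Rightarrow> nat \<Rightarrow> nat" where
  "rat_code z d = prod_encode (int_encode z, d - 1)"

lemma rat_num_rat_code: "d > 0 \<Longrightarrow> rat_num (rat_code z d) = z / d"
  by (simp add: rat_num_def rat_code_def)

definition unit_name :: "real \<Rightarrow> baire" where
  "unit_name y = (\<lambda>i. rat_code \<lfloor>y * 2 ^ i\<rfloor> (2 ^ i))"

lemma unit_rep_unit_name: "y \<in> {0..1} \<Longrightarrow> unit_rep (unit_name y) y"
  unfolding unit_rep_def
proof (intro conjI allI)
  fix n :: nat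
  have "\<bar>\<lfloor>y * 2 ^ n\<rfloor> / 2 ^ n - y\<bar> = \<bar>\<lfloor>y * 2 ^ n\<rfloor> - y * 2 ^ n\<bar> / 2 ^ n"
    by (simp add: field_simps abs_divide[symmetric])
  also have "\<dots> \<le> 1 / 2 ^ n"
    by (rule divide_right_mono) (linarith, simp)
  finally have "\<bar>\<lfloor>y * 2 ^ n\<rfloor> / 2 ^ n - y\<bar> \<le> 1 / 2 ^ n" .
  then show "\<bar>rat_num (unit_name y n) - y\<bar> \<le> (1/2) ^ n"
    by (simp add: unit_name_def rat_num_rat_code power_divide)
qed auto

lemma represented_prob_space_unit:
  "represented_prob_space unit_measure {0..1} unit_basic unit_rep unit_name lborel"
proof -
  have coordinates: "{y \<in> space unit_measure. unit_name y i = a} \<in> sets unit_measure" for i a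
  proof -
    have "(\<lambda>y::real. rat_code \<lfloor>y * 2 ^ i\<rfloor> (2 ^ i)) \<in> measurable borel (count_space UNIV)"
      by (rule measurable_compose[OF _ measurable_count_space]) measurable
    then have "{y. unit_name y i = a} \<in> sets borel"
      using measurable_sets[of _ borel "count_space UNIV" "{a}"] by (simp add: unit_name_def vimage_def)
    then show ?thesis
      by (auto simp: sets_unit_measure_iff space_unit_measure Collect_conj_eq intro: sets.Int)
  qed
  show ?thesis
  proof (rule represented_prob_space.intro[OF prob_space_unit_measure], unfold_locales)
    show "unit_basic n \<in> sets unit_measure" for n
    proof -
      have "unit_basic n = {0..1} \<inter> {rat_num (fst (prod_decode n))<..<rat_num (snd (prod_decode n))}"
        unfolding unit_basic_def by auto
      then show ?thesis unfolding sets_unit_measure_iff by auto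
    qed
    show "{y \<in> {0..1}. P (map (unit_name y) [0..<M])} \<in> sets unit_measure" for M P
      using sets_Collect_prefix[OF coordinates] by (simp add: space_unit_measure)
  qed (simp_all add: space_unit_measure unit_rep_unit_name measure_unit_measure)
qed

definition grid_index :: "nat \<Rightarrow> real \<Rightarrow> nat" where
  "grid_index n r = min (nat \<lfloor>r * n\<rfloor>) (n - 1)"

lemma grid_index_bounds:
  assumes "x \<in> {0..1}" "\<bar>r - x\<bar> \<le> h" "h > 0" "n > 0"
  shows "grid_index n r / n - 2 * h < x" "x < (grid_index n r + 1) / n + 2 * h"
proof -
  define j where "j = grid_index n r"
  have "real j \<le> max 0 (r * n)"
    unfolding j_def grid_index_def by linarith
  have "j / n \<le> max 0 r"
  proof (cases "0 \<le> r")
    case True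
    then have "real j \<le> r * n" using \<open>real j \<le> max 0 (r * n)\<close> by simp
    then have "j / n \<le> r" using assms(4) by (simp add: divide_le_eq)
    then show ?thesis by simp
  next
    case False
    then have "r * n \<le> 0" using assms(4) by (simp add: mult_nonpos_nonneg)
    then show ?thesis using \<open>real j \<le> max 0 (r * n)\<close> by simp
  qed
  then show "grid_index n r / n - 2 * h < x"
    using assms(1-3) unfolding j_def by (auto simp: abs_le_iff)
  have "x \<le> (j + 1) / n + h"
  proof (cases "j = n - 1")
    case True
    then have "(j + 1) / n = 1" using assms(4) by (simp add: of_nat_diff)
    then show ?thesis using assms(1,3) by simp
  next
    case False
    then have "r * n < j + 1"
      unfolding j_def grid_index_def by (simp add: min_def split: if_splits; linarith)
    then have "r < (j + 1) / n"
      using assms(4) by (simp add: pos_less_divide_eq)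
    then show ?thesis using assms(2) by (simp add: abs_le_iff)
  qed
  then show "x < (grid_index n r + 1) / n + 2 * h"
    using assms(3) unfolding j_def by simp
qed

lemma unit_cell_scheme:
  assumes "0 \<le> \<epsilon>" "\<epsilon> < 1" "\<gamma> > 0"
  shows "\<exists>L k (C :: nat set) cell R.
    cell_scheme unit_rep {0..1} unit_basic unit_measure \<epsilon> L k C cell R \<and> k / card C < \<epsilon> + \<gamma>"
proof -
  interpret represented_prob_space unit_measure "{0..1}" unit_basic unit_rep unit_name lborel
    by (rule represented_prob_space_unit)
  obtain N k where k: "k \<le> (2::nat) ^ N" "\<epsilon> * 2 ^ N < k" "k / 2 ^ N < \<epsilon> + \<gamma>"
    using exists_dyadic_count[OF assms] by blast
  define n :: nat where "n = 2 ^ N"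
  have "n > 0" by (simp add: n_def)
  have "k / n - \<epsilon> > 0" using k(2) by (simp add: n_def field_simps)
  then obtain L where L: "(1/2::real) ^ L < (k / n - \<epsilon>) / (4 * n)"
    using real_arch_pow_inv[of "(k / n - \<epsilon>) / (4 * n)" "1/2"] \<open>n > 0\<close> by auto
  define h :: real where "h = (1/2) ^ L"
  have "h > 0" by (simp add: h_def)
  \<comment> \<open>cell \<open>j\<close> is the interval \<open>(j/n - 2h, (j+1)/n + 2h)\<close>, written with denominator \<open>n 2^L\<close>\<close>
  define R where "R j = prod_encode (rat_code (int j * 2 ^ L - 2 * n) (n * 2 ^ L),
      rat_code ((int j + 1) * 2 ^ L + 2 * n) (n * 2 ^ L))" for j :: nat
  have R: "unit_basic (R j) = {x \<in> {0..1}. j / n - 2 * h < x \<and> x < (j + 1) / n + 2 * h}" for j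
  proof -
    have "(int j * 2 ^ L - 2 * n) / real (n * 2 ^ L) = j / n - 2 * h"
      "((int j + 1) * 2 ^ L + 2 * n) / real (n * 2 ^ L) = (j + 1) / n + 2 * h"
      using \<open>n > 0\<close> by (simp_all add: h_def field_simps power_divide)
    then show ?thesis
      using \<open>n > 0\<close> by (simp add: unit_basic_def R_def rat_num_rat_code add.commute)
  qed
  define cell where "cell l = grid_index n (rat_num (l ! L))" for l
  have "cell_scheme unit_rep {0..1} unit_basic unit_measure \<epsilon> (Suc L) k {..<n} cell R"
  proof (rule cell_scheme_if_cells_small[where b="1 / n + 4 * h"])
    show "x \<in> unit_basic (R (cell (map q [0..<Suc L])))" if "unit_rep q x" for q x
    proof -
      have "x \<in> {0..1}" "\<bar>rat_num (q L) - x\<bar> \<le> h"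
        using that by (auto simp: unit_rep_def h_def)
      from grid_index_bounds[OF this \<open>h > 0\<close> \<open>n > 0\<close>] show ?thesis
        using \<open>x \<in> {0..1}\<close> by (simp add: R cell_def add.commute del: upt_Suc)
    qed
    show "measure unit_measure (unit_basic (R j)) \<le> 1 / n + 4 * h" for j
    proof -
      have "measure unit_measure (unit_basic (R j)) = measure lborel (unit_basic (R j))"
        using measure_unit_measure[OF sets_basic] by simp
      also have "\<dots> \<le> measure lborel {j / n - 2 * h .. (j + 1) / n + 2 * h}"
      proof (rule measure_mono_fmeasurable)
        show "unit_basic (R j) \<in> sets lborel"
          using sets_basic[of "R j"] by (simp add: sets_unit_measure_iff)
        show "{j / n - 2 * h .. (j + 1) / n + 2 * h} \<in> fmeasurable lborel"
          using fmeasurable_cbox[of "j / n - 2 * h" "(j + 1) / n + 2 * h"] by simp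
      qed (auto simp: R add.commute)
      also have "\<dots> = 1 / n + 4 * h"
        using \<open>h > 0\<close> \<open>n > 0\<close> by (simp add: field_simps)
      finally show ?thesis .
    qed
    have "real (n - k) * (1 / n + 4 * h) \<le> 1 - k / n + n * 4 * h"
      using k(1) \<open>h > 0\<close> \<open>n > 0\<close> by (simp add: n_def of_nat_diff field_simps)
    moreover have "n * 4 * h < k / n - \<epsilon>"
      using L \<open>n > 0\<close> by (simp add: h_def field_simps)
    ultimately show "\<epsilon> < 1 - real (card {..<n} - k) * (1 / n + 4 * h)"
      by simp
    show "cell w \<in> {..<n}" for w
      using \<open>n > 0\<close> by (simp add: cell_def grid_index_def min_less_iff_disj)
  qed (use k(1) sets_basic in \<open>auto simp: space_unit_measure n_def\<close>)
  then show ?thesis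
    using k(3) by (intro exI) (auto simp: n_def)
qed

theorem theorem10p1:
  fixes \<epsilon> \<delta> :: real
  assumes "\<epsilon> \<in> {0..1}" and "\<delta> \<in> {0..1}"
  shows "(weihrauch_le (PC_cantor \<epsilon>) (PC_cantor \<delta>) \<longleftrightarrow> strong_weihrauch_le (PC_cantor \<epsilon>) (PC_cantor \<delta>))
       \<and> (strong_weihrauch_le (PC_cantor \<epsilon>) (PC_cantor \<delta>) \<longleftrightarrow> \<epsilon> \<ge> \<delta>)
       \<and> (weihrauch_le (PC_unit \<epsilon>) (PC_unit \<delta>) \<longleftrightarrow> strong_weihrauch_le (PC_unit \<epsilon>) (PC_unit \<delta>))
       \<and> (strong_weihrauch_le (PC_unit \<epsilon>) (PC_unit \<delta>) \<longleftrightarrow> \<epsilon> \<ge> \<delta>)"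
proof -
  have "0 \<le> \<epsilon>" using assms(1) by simp
  have "(weihrauch_le (PC_cantor \<epsilon>) (PC_cantor \<delta>) \<longleftrightarrow> \<delta> \<le> \<epsilon>) \<and>
      (strong_weihrauch_le (PC_cantor \<epsilon>) (PC_cantor \<delta>) \<longleftrightarrow> \<delta> \<le> \<epsilon>)"
    unfolding PC_cantor_def
    by (rule represented_prob_space.weihrauch_le_PC_iff[OF represented_prob_space_cantor assms
          cantor_cell_scheme[OF \<open>0 \<le> \<epsilon>\<close>]])
  moreover have "(weihrauch_le (PC_unit \<epsilon>) (PC_unit \<delta>) \<longleftrightarrow> \<delta> \<le> \<epsilon>) \<and>
      (strong_weihrauch_le (PC_unit \<epsilon>) (PC_unit \<delta>) \<longleftrightarrow> \<delta> \<le> \<epsilon>)"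
    unfolding PC_unit_def
    by (rule represented_prob_space.weihrauch_le_PC_iff[OF represented_prob_space_unit assms
          unit_cell_scheme[OF \<open>0 \<le> \<epsilon>\<close>]])
  ultimately show ?thesis by blast
qed

end
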